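(* Let $r,m\ge0$ and $k\ge1$ be integers and $n\ge0$. Then $$\lim_{q\to1}\frac{\sum_{j=0}^{2n+1}(-1)^jq^{rj^2+mj}\begin{bmatrix} 2n+1\\ j\end{bmatrix}_{q^k}}{(q;q^2)_{n+1}}=\big((2n+1)r+m\big)(k-2r)^n.$$
   Context: $(x;q)_n=\prod_{j=0}^{n-1}(1-q^jx)$. The Gaussian binomial coefficient is $\begin{bmatrix} n\\ j\end{bmatrix}_q=\frac{(q;q)_n}{(q;q)_j(q;q)_{n-j}}$ for $0\le j\le n$, a polynomial in $q$; $\begin{bmatrix} n\\ j\end{bmatrix}_{q^k}$ is this with $q$ replaced by $q^k$. The quotient is a rational function of $q$ and the limit is taken as $q\to1$. *)

theory Defs
  imports "HOL-Analysis.Analysis"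
begin

definition qpoch :: "real \<Rightarrow> real \<Rightarrow> nat \<Rightarrow> real" where
  "qpoch x q n = (\<Prod>j<n. 1 - q ^ j * x)"

definition qbinom :: "real \<Rightarrow> nat \<Rightarrow> nat \<Rightarrow> real" where
  "qbinom q n j = qpoch q q n / (qpoch q q j * qpoch q q (n - j))"

end

(*
  Write S_N(m) for the alternating sum with 2n+1 replaced by N.  Pascal's rule for the Gaussian
  binomials gives S_{N+1}(m) = S_N(m+k) - q^(r+m) S_N(m+2r), i.e. a difference of S_N with step
  k - 2r plus (1 - q^(r+m)) times a shift of S_N.  Regarding m as a quantity of size (1-q)^(-1/2),
  S_N is of order (1-q)^(N/2), and the leading coefficients of its finite differences in m obey a
  recursion with the explicit solution c^j (l+2j)!/(j! 2^j), c = k - 2r.  For odd N = 2n+1 the sum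
  is antisymmetric about m = -rN, so S_N(m) is a single first difference, of order (1-q)^(n+1)
  with coefficient (k-2r)^n (2n+1)!! ((2n+1)r + m).  The denominator is (2n+1)!! (1-q)^(n+1)
  to first order.
*)

theory Submission
  imports Defs "HOL-Library.Landau_Symbols"
begin

section \<open>Finite differences in the exponent\<close>

definition fdiff :: "int \<Rightarrow> (int \<Rightarrow> real \<Rightarrow> real) \<Rightarrow> int \<Rightarrow> real \<Rightarrow> real" where
  "fdiff h \<Phi> = (\<lambda>m q. \<Phi> (m + h) q - \<Phi> m q)"

fun fdiffs :: "int list \<Rightarrow> (int \<Rightarrow> real \<Rightarrow> real) \<Rightarrow> int \<Rightarrow> real \<Rightarrow> real" where
  "fdiffs [] \<Phi> = \<Phi>"
| "fdiffs (h # hs) \<Phi> = fdiffs hs (fdiff h \<Phi>)"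

lemma fdiffs_cong:
  assumes "\<And>m. \<Phi> m q = \<Psi> m q"
  shows "fdiffs hs \<Phi> m q = fdiffs hs \<Psi> m q"
  using assms
proof (induction hs arbitrary: \<Phi> \<Psi> m)
  case (Cons h hs)
  then have "fdiff h \<Phi> m' q = fdiff h \<Psi> m' q" for m' by (simp add: fdiff_def)
  then show ?case using Cons.IH[of "fdiff h \<Phi>" "fdiff h \<Psi>"] by simp
qed simp

lemma fdiffs_add: "fdiffs hs (\<lambda>m q. \<Phi> m q + \<Psi> m q) m q = fdiffs hs \<Phi> m q + fdiffs hs \<Psi> m q"
proof (induction hs arbitrary: \<Phi> \<Psi> m)
  case (Cons h hs)
  have "fdiff h (\<lambda>m q. \<Phi> m q + \<Psi> m q) = (\<lambda>m q. fdiff h \<Phi> m q + fdiff h \<Psi> m q)"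
    by (simp add: fdiff_def fun_eq_iff)
  then show ?case using Cons.IH[of "fdiff h \<Phi>" "fdiff h \<Psi>"] by simp
qed simp

lemma fdiffs_cmult: "fdiffs hs (\<lambda>m q. c q * \<Phi> m q) m q = c q * fdiffs hs \<Phi> m q"
proof (induction hs arbitrary: \<Phi> m)
  case (Cons h hs)
  have "fdiff h (\<lambda>m q. c q * \<Phi> m q) = (\<lambda>m q. c q * fdiff h \<Phi> m q)"
    by (simp add: fdiff_def fun_eq_iff algebra_simps)
  then show ?case using Cons.IH[of "fdiff h \<Phi>"] by simp
qed simp

lemma fdiffs_shift: "fdiffs hs (\<lambda>m. \<Phi> (m + s)) m = fdiffs hs \<Phi> (m + s)"
proof (induction hs arbitrary: \<Phi> m)
  case (Cons h hs)
  have "fdiff h (\<lambda>m. \<Phi> (m + s)) = (\<lambda>m. fdiff h \<Phi> (m + s))"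
    by (simp add: fdiff_def fun_eq_iff algebra_simps)
  then show ?case using Cons.IH[of "fdiff h \<Phi>"] by simp
qed simp

lemma fdiffs_const:
  assumes "hs \<noteq> []"
  shows "fdiffs hs (\<lambda>m. c) m q = 0"
proof -
  obtain h hs' where hs: "hs = h # hs'" using assms by (cases hs) auto
  have "fdiffs hs (\<lambda>m. c) m q = fdiffs hs' (\<lambda>m q. 0 * c q) m q"
    unfolding hs by (simp only: fdiffs.simps) (rule fdiffs_cong, simp add: fdiff_def)
  also have "\<dots> = 0" by (simp only: fdiffs_cmult)
  finally show ?thesis .
qed

lemma fdiffs_powr:
  "fdiffs hs (\<lambda>m q. q powr (e + of_int m)) m q
     = q powr (e + of_int m) * (\<Prod>h\<leftarrow>hs. q powr of_int h - 1)"
proof (induction hs arbitrary: m)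
  case (Cons h hs)
  have "fdiffs (h # hs) (\<lambda>m q. q powr (e + of_int m)) m q
      = fdiffs hs (\<lambda>m q. (q powr of_int h - 1) * q powr (e + of_int m)) m q"
    by (simp only: fdiffs.simps) (rule fdiffs_cong, simp add: fdiff_def powr_add algebra_simps)
  then show ?case by (simp add: fdiffs_cmult Cons.IH)
qed simp

section \<open>Half-integer orders of vanishing at 1\<close>

lemma eventually_at_1_power_neq_0: "eventually (\<lambda>q::real. (1 - q) ^ p \<noteq> 0) (at 1)"
proof -
  have "eventually (\<lambda>q::real. q \<noteq> 1) (at 1)" by (rule eventually_neq_at_within)
  then show ?thesis by eventually_elim simp
qed

lemma smallo_power_at_1:
  assumes "p' < p"
  shows "(\<lambda>q::real. (1 - q) ^ p) \<in> o[at 1](\<lambda>q. (1 - q) ^ p')"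
proof (rule smalloI_tendsto)
  have "((\<lambda>q::real. (1 - q) ^ (p - p')) \<longlongrightarrow> (1 - 1) ^ (p - p')) (at 1)"
    by (intro tendsto_intros)
  moreover have "(1 - 1 :: real) ^ (p - p') = 0" using assms by simp
  ultimately have "((\<lambda>q::real. (1 - q) ^ (p - p')) \<longlongrightarrow> 0) (at 1)"
    by (simp only:)
  moreover have "eventually (\<lambda>q::real. (1 - q) ^ (p - p') = (1 - q) ^ p / (1 - q) ^ p') (at 1)"
    using eventually_at_1_power_neq_0[of 1]
    by eventually_elim (use assms in \<open>simp add: power_diff\<close>)
  ultimately show "((\<lambda>q::real. (1 - q) ^ p / (1 - q) ^ p') \<longlongrightarrow> 0) (at 1)"
    by (rule Lim_transform_eventually)
qed (rule eventually_at_1_power_neq_0)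

lemma bigo_power_at_1:
  assumes "p' \<le> p"
  shows "(\<lambda>q::real. (1 - q) ^ p) \<in> O[at 1](\<lambda>q. (1 - q) ^ p')"
proof (cases "p' = p")
  case False
  with assms show ?thesis by (intro landau_o.small_imp_big smallo_power_at_1) simp
qed simp

lemma bigo_power_at_1I:
  fixes f :: "real \<Rightarrow> real"
  assumes "((\<lambda>q. f q / (1 - q) ^ p) \<longlongrightarrow> L) (at 1)"
  shows "f \<in> O[at 1](\<lambda>q. (1 - q) ^ p)"
  by (rule bigoI_tendsto[OF assms eventually_at_1_power_neq_0])

text \<open>\<open>f q\<close> behaves like \<open>v * (1 - q) ^ (w / 2)\<close> as \<open>q \<rightarrow> 1\<close>. For odd \<open>w\<close> only the
  order of vanishing is recorded: coefficients of half-integer powers never enter a limit.\<close>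

definition half_power_asymp :: "nat \<Rightarrow> real \<Rightarrow> (real \<Rightarrow> real) \<Rightarrow> bool" where
  "half_power_asymp w v f \<longleftrightarrow>
     (if even w then ((\<lambda>q::real. f q / (1 - q) ^ (w div 2)) \<longlongrightarrow> v) (at 1)
      else f \<in> O[at 1](\<lambda>q. (1 - q) ^ Suc (w div 2)))"

lemma half_power_asymp_bigo:
  assumes "half_power_asymp w v f"
  shows "f \<in> O[at 1](\<lambda>q. (1 - q) ^ ((w + 1) div 2))"
proof (cases "even w")
  case True
  then have "((\<lambda>q. f q / (1 - q) ^ ((w + 1) div 2)) \<longlongrightarrow> v) (at 1)"
    using assms unfolding half_power_asymp_def by simp
  then show ?thesis by (rule bigo_power_at_1I)
next
  case False
  then show ?thesis using assms unfolding half_power_asymp_def by simp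
qed

lemma half_power_asymp_zeroI:
  assumes "f \<in> O[at 1](\<lambda>q. (1 - q) ^ p)" "w < 2 * p"
  shows "half_power_asymp w 0 f"
proof (cases "even w")
  case True
  have "(\<lambda>q::real. (1 - q) ^ p) \<in> o[at 1](\<lambda>q. (1 - q) ^ (w div 2))"
    using assms(2) by (intro smallo_power_at_1) simp
  with assms(1) have "f \<in> o[at 1](\<lambda>q. (1 - q) ^ (w div 2))"
    by (rule landau_o.big_small_trans)
  then show ?thesis using True unfolding half_power_asymp_def by (simp add: smalloD_tendsto)
next
  case False
  have "(\<lambda>q::real. (1 - q) ^ p) \<in> O[at 1](\<lambda>q. (1 - q) ^ Suc (w div 2))"
    using assms(2) False by (intro bigo_power_at_1) presburger
  with assms(1) have "f \<in> O[at 1](\<lambda>q. (1 - q) ^ Suc (w div 2))"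
    by (rule landau_o.big_trans)
  then show ?thesis using False unfolding half_power_asymp_def by simp
qed

lemma half_power_asymp_add:
  assumes "half_power_asymp w v f" "half_power_asymp w u g"
  shows "half_power_asymp w (v + u) (\<lambda>q. f q + g q)"
proof (cases "even w")
  case True
  then show ?thesis using assms unfolding half_power_asymp_def
    by (simp add: add_divide_distrib tendsto_add)
next
  case False
  then show ?thesis using assms unfolding half_power_asymp_def
    by (simp add: sum_in_bigo)
qed

lemma half_power_asymp_cong:
  assumes "half_power_asymp w v f" "eventually (\<lambda>q. f q = g q) (at 1)"
  shows "half_power_asymp w v g"
proof (cases "even w")
  case True
  have "eventually (\<lambda>q. f q / (1 - q) ^ (w div 2) = g q / (1 - q) ^ (w div 2)) (at 1)"
    using assms(2) by eventually_elim simp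
  from tendsto_cong[OF this] True show ?thesis
    using assms(1) unfolding half_power_asymp_def by simp
next
  case False
  with assms show ?thesis unfolding half_power_asymp_def
    by (simp add: landau_o.big.in_cong)
qed

lemma half_power_asymp_mult:
  assumes f: "half_power_asymp a x f" and g: "half_power_asymp b y g"
  shows "half_power_asymp (a + b) (if even a then x * y else 0) (\<lambda>q. f q * g q)"
proof (cases "even a \<and> even b")
  case True
  then have "((\<lambda>q. (f q / (1 - q) ^ (a div 2)) * (g q / (1 - q) ^ (b div 2))) \<longlongrightarrow> x * y) (at 1)"
    using assms unfolding half_power_asymp_def by (intro tendsto_mult) simp_all
  moreover have "(a + b) div 2 = a div 2 + b div 2" using True by auto
  ultimately show ?thesis using True unfolding half_power_asymp_def by (simp add: power_add)
next
  case False
  define p where "p = (a + 1) div 2 + (b + 1) div 2"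
  have "(\<lambda>q. f q * g q) \<in> O[at 1](\<lambda>q. (1 - q) ^ ((a + 1) div 2) * (1 - q) ^ ((b + 1) div 2))"
    using half_power_asymp_bigo[OF f] half_power_asymp_bigo[OF g] by (rule landau_o.big.mult)
  then have "(\<lambda>q. f q * g q) \<in> O[at 1](\<lambda>q. (1 - q) ^ p)" by (simp add: p_def power_add)
  moreover have "a + b < 2 * p" using False unfolding p_def by presburger
  ultimately have "half_power_asymp (a + b) 0 (\<lambda>q. f q * g q)"
    by (rule half_power_asymp_zeroI)
  moreover have "even (a + b) \<Longrightarrow> (if even a then x * y else 0) = 0" using False by auto
  ultimately show ?thesis by (cases "even (a + b)") (simp_all add: half_power_asymp_def)
qed

section \<open>Graded families\<close>

text \<open>Think of \<open>m\<close> as a quantity of size \<open>(1 - q) ^ (-1/2)\<close>: the family behaves like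
  \<open>(1 - q) ^ (a/2) * (\<Sum>l. \<sigma> l * (m * sqrt (1 - q)) ^ l / fact l)\<close>. Each difference in \<open>m\<close>
  gains a factor \<open>sqrt (1 - q)\<close>, and \<open>\<sigma> l\<close> is the leading coefficient of the \<open>l\<close>-th differences.\<close>

definition graded :: "nat \<Rightarrow> (nat \<Rightarrow> real) \<Rightarrow> (int \<Rightarrow> real \<Rightarrow> real) \<Rightarrow> bool" where
  "graded a \<sigma> \<Phi> \<longleftrightarrow> (\<forall>hs m. half_power_asymp (a + length hs)
     (\<sigma> (length hs) * (\<Prod>h\<leftarrow>hs. real_of_int h)) (fdiffs hs \<Phi> m))"

lemma gradedD:
  "graded a \<sigma> \<Phi> \<Longrightarrow> half_power_asymp (a + length hs)
     (\<sigma> (length hs) * (\<Prod>h\<leftarrow>hs. real_of_int h)) (fdiffs hs \<Phi> m)"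
  unfolding graded_def by blast

lemma graded_fdiff:
  assumes "graded a \<sigma> \<Phi>"
  shows "graded (Suc a) (\<lambda>l. real_of_int h * \<sigma> (Suc l)) (fdiff h \<Phi>)"
  unfolding graded_def
proof (intro allI)
  fix hs m
  show "half_power_asymp (Suc a + length hs)
      (real_of_int h * \<sigma> (Suc (length hs)) * (\<Prod>h\<leftarrow>hs. real_of_int h)) (fdiffs hs (fdiff h \<Phi>) m)"
    using gradedD[OF assms, of "h # hs" m] by (simp add: mult_ac)
qed

lemma graded_shift:
  assumes "graded a \<sigma> \<Phi>"
  shows "graded a \<sigma> (\<lambda>m. \<Phi> (m + s))"
  using assms unfolding graded_def fdiffs_shift by blast

lemma graded_add:
  assumes "graded a \<sigma> \<Phi>" "graded a \<tau> \<Psi>"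
  shows "graded a (\<lambda>l. \<sigma> l + \<tau> l) (\<lambda>m q. \<Phi> m q + \<Psi> m q)"
  unfolding graded_def
proof (intro allI)
  fix hs m
  have "fdiffs hs (\<lambda>m q. \<Phi> m q + \<Psi> m q) m = (\<lambda>q. fdiffs hs \<Phi> m q + fdiffs hs \<Psi> m q)"
    by (rule ext, rule fdiffs_add)
  then show "half_power_asymp (a + length hs) ((\<sigma> (length hs) + \<tau> (length hs)) * (\<Prod>h\<leftarrow>hs. real_of_int h))
      (fdiffs hs (\<lambda>m q. \<Phi> m q + \<Psi> m q) m)"
    using half_power_asymp_add[OF gradedD[OF assms(1), of hs m] gradedD[OF assms(2), of hs m]]
    by (simp add: distrib_right)
qed

lemma graded_cong:
  assumes "graded a \<sigma> \<Phi>" "eventually (\<lambda>q. \<forall>m. \<Phi> m q = \<Psi> m q) (at 1)"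
  shows "graded a \<sigma> \<Psi>"
  unfolding graded_def
proof (intro allI)
  fix hs m
  have "eventually (\<lambda>q. fdiffs hs \<Phi> m q = fdiffs hs \<Psi> m q) (at 1)"
    using assms(2) by eventually_elim (rule fdiffs_cong, blast)
  then show "half_power_asymp (a + length hs) (\<sigma> (length hs) * (\<Prod>h\<leftarrow>hs. real_of_int h)) (fdiffs hs \<Psi> m)"
    by (rule half_power_asymp_cong[OF gradedD[OF assms(1)]])
qed

text \<open>Leibniz rule for the symbols; a term whose first factor has odd weight \<open>a + s\<close> vanishes in
  the limit.\<close>

definition symbol_mult :: "nat \<Rightarrow> (nat \<Rightarrow> real) \<Rightarrow> (nat \<Rightarrow> real) \<Rightarrow> nat \<Rightarrow> real" where
  "symbol_mult a \<sigma> \<tau> l =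
     (\<Sum>s\<le>l. if even (a + s) then of_nat (l choose s) * \<sigma> s * \<tau> (l - s) else 0)"

lemma symbol_mult_0: "symbol_mult a \<sigma> \<tau> 0 = (if even a then \<sigma> 0 * \<tau> 0 else 0)"
  by (simp add: symbol_mult_def)

lemma symbol_mult_Suc:
  "real_of_int h * symbol_mult a \<sigma> \<tau> (Suc l)
     = symbol_mult (Suc a) (\<lambda>l. real_of_int h * \<sigma> (Suc l)) \<tau> l
       + symbol_mult a \<sigma> (\<lambda>l. real_of_int h * \<tau> (Suc l)) l"
proof -
  define g where "g s = (if even (a + s) then \<sigma> s * \<tau> (Suc l - s) else 0)" for s
  have "(\<Sum>s\<le>l. of_nat (l choose s) * g s) = (\<Sum>s\<le>Suc l. of_nat (l choose s) * g s)"
    by simp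
  also have "\<dots> = g 0 + (\<Sum>s\<le>l. of_nat (l choose Suc s) * g (Suc s))"
    by (simp add: sum.atMost_Suc_shift del: sum.atMost_Suc)
  finally have shift: "(\<Sum>s\<le>l. of_nat (l choose s) * g s)
      = g 0 + (\<Sum>s\<le>l. of_nat (l choose Suc s) * g (Suc s))" .
  have "symbol_mult a \<sigma> \<tau> (Suc l) = (\<Sum>s\<le>Suc l. of_nat (Suc l choose s) * g s)"
    unfolding symbol_mult_def g_def by (intro sum.cong refl) auto
  also have "\<dots> = g 0 + (\<Sum>s\<le>l. of_nat (l choose s) * g (Suc s))
                  + (\<Sum>s\<le>l. of_nat (l choose Suc s) * g (Suc s))"
    by (simp add: sum.atMost_Suc_shift distrib_right sum.distrib del: sum.atMost_Suc)
  also have "\<dots> = (\<Sum>s\<le>l. of_nat (l choose s) * g (Suc s)) + (\<Sum>s\<le>l. of_nat (l choose s) * g s)"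
    unfolding shift by simp
  finally have "symbol_mult a \<sigma> \<tau> (Suc l)
      = (\<Sum>s\<le>l. of_nat (l choose s) * g (Suc s)) + (\<Sum>s\<le>l. of_nat (l choose s) * g s)" .
  moreover have "symbol_mult (Suc a) (\<lambda>l. real_of_int h * \<sigma> (Suc l)) \<tau> l
      = real_of_int h * (\<Sum>s\<le>l. of_nat (l choose s) * g (Suc s))"
    unfolding symbol_mult_def g_def sum_distrib_left by (intro sum.cong refl) (auto simp: mult_ac)
  moreover have "symbol_mult a \<sigma> (\<lambda>l. real_of_int h * \<tau> (Suc l)) l
      = real_of_int h * (\<Sum>s\<le>l. of_nat (l choose s) * g s)"
    unfolding symbol_mult_def g_def sum_distrib_left
    by (intro sum.cong refl) (auto simp: Suc_diff_le mult_ac)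
  ultimately show ?thesis by (simp add: distrib_left)
qed

lemma fdiffs_Cons_mult:
  "fdiffs (h # hs) (\<lambda>m q. \<Phi> m q * \<Psi> m q) m q
     = fdiffs hs (\<lambda>m q. fdiff h \<Phi> m q * \<Psi> (m + h) q) m q
       + fdiffs hs (\<lambda>m q. \<Phi> m q * fdiff h \<Psi> m q) m q"
  by (simp only: fdiffs.simps fdiffs_add[symmetric]) (rule fdiffs_cong, simp add: fdiff_def algebra_simps)

lemma graded_mult:
  assumes "graded a \<sigma> \<Phi>" "graded b \<tau> \<Psi>"
  shows "graded (a + b) (symbol_mult a \<sigma> \<tau>) (\<lambda>m q. \<Phi> m q * \<Psi> m q)"
  unfolding graded_def
proof (intro allI)
  fix hs m
  show "half_power_asymp (a + b + length hs) (symbol_mult a \<sigma> \<tau> (length hs) * (\<Prod>h\<leftarrow>hs. real_of_int h))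
      (fdiffs hs (\<lambda>m q. \<Phi> m q * \<Psi> m q) m)"
    using assms
  proof (induction hs arbitrary: a b \<sigma> \<tau> \<Phi> \<Psi> m)
    case Nil
    have "half_power_asymp a (\<sigma> 0) (\<Phi> m)" "half_power_asymp b (\<tau> 0) (\<Psi> m)"
      using gradedD[OF Nil.prems(1), of "[]" m] gradedD[OF Nil.prems(2), of "[]" m] by simp_all
    from half_power_asymp_mult[OF this] show ?case by (simp add: symbol_mult_0)
  next
    case (Cons h hs)
    define \<sigma>' where "\<sigma>' l = real_of_int h * \<sigma> (Suc l)" for l
    define \<tau>' where "\<tau>' l = real_of_int h * \<tau> (Suc l)" for l
    let ?P = "\<Prod>h\<leftarrow>hs. real_of_int h"
    have "half_power_asymp (Suc a + b + length hs) (symbol_mult (Suc a) \<sigma>' \<tau> (length hs) * ?P)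
        (fdiffs hs (\<lambda>m q. fdiff h \<Phi> m q * \<Psi> (m + h) q) m)"
      using Cons.IH[OF graded_fdiff[OF Cons.prems(1)] graded_shift[OF Cons.prems(2)]]
      unfolding \<sigma>'_def .
    moreover have "half_power_asymp (a + Suc b + length hs) (symbol_mult a \<sigma> \<tau>' (length hs) * ?P)
        (fdiffs hs (\<lambda>m q. \<Phi> m q * fdiff h \<Psi> m q) m)"
      using Cons.IH[OF Cons.prems(1) graded_fdiff[OF Cons.prems(2)]]
      unfolding \<tau>'_def .
    ultimately have "half_power_asymp (a + b + length (h # hs))
        (symbol_mult (Suc a) \<sigma>' \<tau> (length hs) * ?P + symbol_mult a \<sigma> \<tau>' (length hs) * ?P)
        (\<lambda>q. fdiffs hs (\<lambda>m q. fdiff h \<Phi> m q * \<Psi> (m + h) q) m q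
            + fdiffs hs (\<lambda>m q. \<Phi> m q * fdiff h \<Psi> m q) m q)"
      by (intro half_power_asymp_add) simp_all
    moreover have "symbol_mult (Suc a) \<sigma>' \<tau> (length hs) * ?P + symbol_mult a \<sigma> \<tau>' (length hs) * ?P
        = symbol_mult a \<sigma> \<tau> (length (h # hs)) * (\<Prod>h\<leftarrow>h # hs. real_of_int h)"
      unfolding \<sigma>'_def \<tau>'_def distrib_right[symmetric] symbol_mult_Suc[symmetric] by simp
    moreover have "fdiffs (h # hs) (\<lambda>m q. \<Phi> m q * \<Psi> m q) m
        = (\<lambda>q. fdiffs hs (\<lambda>m q. fdiff h \<Phi> m q * \<Psi> (m + h) q) m q
               + fdiffs hs (\<lambda>m q. \<Phi> m q * fdiff h \<Psi> m q) m q)"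
      by (rule ext) (rule fdiffs_Cons_mult)
    ultimately show ?case by simp
  qed
qed

lemma tendsto_one_minus_powr_over: "((\<lambda>q::real. (1 - q powr e) / (1 - q)) \<longlongrightarrow> e) (at 1)"
proof -
  have "((\<lambda>q::real. q powr e) has_real_derivative e * 1 powr (e - 1)) (at 1)"
    by (rule has_real_derivative_powr) simp
  then have "((\<lambda>q::real. (q powr e - 1) / (q - 1)) \<longlongrightarrow> e) (at 1)"
    unfolding has_field_derivative_iff by simp
  moreover have "(q powr e - 1) / (q - 1) = (1 - q powr e) / (1 - q)" for q :: real
    by (metis minus_diff_eq minus_divide_divide)
  ultimately show ?thesis by simp
qed

lemma tendsto_prod_powr_minus_1_over:
  "((\<lambda>q::real. (\<Prod>h\<leftarrow>hs. q powr of_int h - 1) / (1 - q) ^ length hs)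
     \<longlongrightarrow> (\<Prod>h\<leftarrow>hs. - real_of_int h)) (at 1)"
proof (induction hs)
  case (Cons h hs)
  have "((\<lambda>q::real. - ((1 - q powr of_int h) / (1 - q))
      * ((\<Prod>h\<leftarrow>hs. q powr of_int h - 1) / (1 - q) ^ length hs))
      \<longlongrightarrow> - real_of_int h * (\<Prod>h\<leftarrow>hs. - real_of_int h)) (at 1)"
    by (intro tendsto_mult tendsto_minus tendsto_one_minus_powr_over Cons.IH)
  then show ?case by (simp add: minus_divide_left)
qed simp

lemma graded_one: "graded 0 (\<lambda>l. of_bool (l = 0)) (\<lambda>m q. 1)"
  unfolding graded_def
proof (intro allI)
  fix hs :: "int list" and m :: int
  show "half_power_asymp (0 + length hs) (of_bool (length hs = 0) * (\<Prod>h\<leftarrow>hs. real_of_int h))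
      (fdiffs hs (\<lambda>m q. 1) m)"
  proof (cases "hs = []")
    case True
    then show ?thesis by (simp add: half_power_asymp_def)
  next
    case False
    then have "fdiffs hs (\<lambda>m q. 1) m = (\<lambda>q. 0)" by (intro ext fdiffs_const)
    with False have "half_power_asymp (length hs) 0 (fdiffs hs (\<lambda>m q. 1) m)"
      by (intro half_power_asymp_zeroI[where p = "length hs"]) simp_all
    with False show ?thesis by simp
  qed
qed

lemma fdiffs_one_minus_powr:
  assumes "hs \<noteq> []"
  shows "fdiffs hs (\<lambda>m q. 1 - q powr (e + of_int m)) m q
           = - (q powr (e + of_int m)) * (\<Prod>h\<leftarrow>hs. q powr of_int h - 1)"
proof -
  have "fdiffs hs (\<lambda>m q. 1 - q powr (e + of_int m)) m q
      = fdiffs hs (\<lambda>m q. 1 + (- 1) * q powr (e + of_int m)) m q"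
    by (rule fdiffs_cong) simp
  also have "\<dots> = fdiffs hs (\<lambda>m q. 1) m q + (- 1) * fdiffs hs (\<lambda>m q. q powr (e + of_int m)) m q"
    by (simp only: fdiffs_add fdiffs_cmult)
  finally show ?thesis by (simp add: fdiffs_const[OF assms] fdiffs_powr)
qed

lemma graded_one_minus_powr: "graded 1 (\<lambda>l. of_bool (l = 1)) (\<lambda>m q. 1 - q powr (e + of_int m))"
  unfolding graded_def
proof (intro allI)
  fix hs :: "int list" and m :: int
  let ?u = "\<lambda>m q. 1 - q powr (e + of_int m)"
  show "half_power_asymp (1 + length hs) (of_bool (length hs = 1) * (\<Prod>h\<leftarrow>hs. real_of_int h))
      (fdiffs hs ?u m)"
  proof (cases "hs = []")
    case True
    have "((\<lambda>q. ?u m q / (1 - q) ^ 1) \<longlongrightarrow> e + of_int m) (at 1)"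
      using tendsto_one_minus_powr_over by simp
    then have "half_power_asymp 1 0 (?u m)"
      by (intro half_power_asymp_zeroI[OF bigo_power_at_1I, where p = 1]) simp_all
    with True show ?thesis by simp
  next
    case False
    have "fdiffs hs ?u m = (\<lambda>q. - (q powr (e + of_int m)) * (\<Prod>h\<leftarrow>hs. q powr of_int h - 1))"
      by (intro ext fdiffs_one_minus_powr False)
    moreover have "((\<lambda>q::real. - (q powr (e + of_int m))
        * ((\<Prod>h\<leftarrow>hs. q powr of_int h - 1) / (1 - q) ^ length hs))
        \<longlongrightarrow> - (1 powr (e + of_int m)) * (\<Prod>h\<leftarrow>hs. - real_of_int h)) (at 1)"
      by (intro tendsto_intros tendsto_prod_powr_minus_1_over) simp
    ultimately have lim: "((\<lambda>q. fdiffs hs ?u m q / (1 - q) ^ length hs)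
        \<longlongrightarrow> - (\<Prod>h\<leftarrow>hs. - real_of_int h)) (at 1)"
      by simp
    show ?thesis
    proof (cases "length hs = 1")
      case True
      then obtain h where "hs = [h]" by (cases hs) (simp_all add: length_Suc_conv)
      with lim show ?thesis by (simp add: half_power_asymp_def)
    next
      case False
      with \<open>hs \<noteq> []\<close> have "1 + length hs < 2 * length hs" by (cases hs) auto
      with lim have "half_power_asymp (1 + length hs) 0 (fdiffs hs ?u m)"
        by (intro half_power_asymp_zeroI[OF bigo_power_at_1I])
      with False show ?thesis by simp
    qed
  qed
qed

lemma symbol_mult_indicator_1:
  "symbol_mult 1 (\<lambda>l. of_bool (l = 1)) \<sigma> l = of_nat l * \<sigma> (l - 1)"
proof -
  have "symbol_mult 1 (\<lambda>l. of_bool (l = 1)) \<sigma> l = (\<Sum>s\<le>l. if s = 1 then of_nat l * \<sigma> (l - 1) else 0)"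
    unfolding symbol_mult_def by (intro sum.cong refl) auto
  also have "\<dots> = of_nat l * \<sigma> (l - 1)"
    by (cases l) (simp_all add: sum.delta)
  finally show ?thesis .
qed

section \<open>Gaussian binomial coefficients\<close>

text \<open>\<open>qbinom\<close> is a quotient, junk at \<open>Q = 1\<close> and for \<open>j > n\<close>; this polynomial
  version obeys Pascal's rule unconditionally.\<close>

fun gauss_binom :: "real \<Rightarrow> nat \<Rightarrow> nat \<Rightarrow> real" where
  "gauss_binom Q 0 j = of_bool (j = 0)"
| "gauss_binom Q (Suc n) 0 = 1"
| "gauss_binom Q (Suc n) (Suc j) = gauss_binom Q n j + Q ^ Suc j * gauss_binom Q n (Suc j)"

lemma gauss_binom_0_right [simp]: "gauss_binom Q n 0 = 1"
  by (cases n) auto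

lemma gauss_binom_eq_0: "n < j \<Longrightarrow> gauss_binom Q n j = 0"
proof (induction n arbitrary: j)
  case (Suc n)
  then show ?case by (cases j) auto
qed simp

lemma power_neq_1:
  fixes Q :: real
  assumes "Q > 0" "Q \<noteq> 1" "n > 0"
  shows "Q ^ n \<noteq> 1"
  using assms power_eq_1_iff[of Q n] by auto

lemma qpoch_Suc: "qpoch Q Q (Suc n) = qpoch Q Q n * (1 - Q ^ Suc n)"
  unfolding qpoch_def by (simp add: mult_ac)

lemma qpoch_neq_0:
  assumes "Q > 0" "Q \<noteq> 1"
  shows "qpoch Q Q n \<noteq> 0"
proof -
  have "Q ^ j * Q \<noteq> 1" for j
    using power_neq_1[OF assms, of "Suc j"] by (simp add: mult.commute)
  then show ?thesis unfolding qpoch_def by simp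
qed

lemma qbinom_self: "Q > 0 \<Longrightarrow> Q \<noteq> 1 \<Longrightarrow> qbinom Q n n = 1"
  unfolding qbinom_def using qpoch_neq_0[of Q n] by (simp add: qpoch_def)

lemma qbinom_0_right: "Q > 0 \<Longrightarrow> Q \<noteq> 1 \<Longrightarrow> qbinom Q n 0 = 1"
  unfolding qbinom_def using qpoch_neq_0[of Q n] by (simp add: qpoch_def)

lemma qbinom_Suc_Suc:
  assumes Q: "Q > 0" "Q \<noteq> 1" and j: "j < n"
  shows "qbinom Q (Suc n) (Suc j) = qbinom Q n j + Q ^ Suc j * qbinom Q n (Suc j)"
proof -
  define A where "A = qpoch Q Q j"
  define B where "B = qpoch Q Q (n - Suc j)"
  define P where "P = qpoch Q Q n"
  define x where "x = Q ^ Suc j"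
  define y where "y = Q ^ (n - j)"
  have nj: "n - j = Suc (n - Suc j)" using j by simp
  have A': "qpoch Q Q (Suc j) = A * (1 - x)" unfolding A_def x_def by (rule qpoch_Suc)
  have B': "qpoch Q Q (n - j) = B * (1 - y)" unfolding B_def y_def nj by (rule qpoch_Suc)
  have P': "qpoch Q Q (Suc n) = P * (1 - x * y)"
    unfolding P_def x_def y_def qpoch_Suc using j by (simp add: power_add[symmetric])
  have "A \<noteq> 0" "B \<noteq> 0" unfolding A_def B_def using qpoch_neq_0[OF Q] by blast+
  moreover have "1 - x \<noteq> 0" "1 - y \<noteq> 0"
    unfolding x_def y_def using power_neq_1[OF Q, of "Suc j"] power_neq_1[OF Q, of "n - j"] j by auto
  ultimately have "P / (A * (B * (1 - y))) + x * (P / (A * (1 - x) * B))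
      = (P * (1 - x) + x * P * (1 - y)) / (A * (1 - x) * (B * (1 - y)))"
    by (simp add: divide_simps)
  also have "P * (1 - x) + x * P * (1 - y) = P * (1 - x * y)"
    by (simp add: algebra_simps)
  finally have "P * (1 - x * y) / (A * (1 - x) * (B * (1 - y)))
      = P / (A * (B * (1 - y))) + x * (P / (A * (1 - x) * B))" ..
  then show ?thesis
    unfolding qbinom_def using A' B' P' by (simp add: A_def B_def P_def x_def)
qed

lemma qbinom_eq_gauss_binom:
  assumes "Q > 0" "Q \<noteq> 1" "j \<le> n"
  shows "qbinom Q n j = gauss_binom Q n j"
  using assms(3)
proof (induction n arbitrary: j)
  case 0
  then show ?case using qbinom_self[OF assms(1,2), of 0] by simp
next
  case (Suc n)
  show ?case
  proof (cases j)
    case 0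
    then show ?thesis using qbinom_0_right[OF assms(1,2)] by simp
  next
    case (Suc j')
    show ?thesis
    proof (cases "j' = n")
      case True
      then show ?thesis
        using Suc Suc.IH[of n] qbinom_self[OF assms(1,2)] by (simp add: gauss_binom_eq_0)
    next
      case False
      with Suc \<open>j \<le> Suc n\<close> have "j' < n" by simp
      then show ?thesis
        using Suc Suc.IH[of j'] Suc.IH[of "Suc j'"] qbinom_Suc_Suc[OF assms(1,2)] by simp
    qed
  qed
qed

lemma qbinom_symmetric: "j \<le> n \<Longrightarrow> qbinom Q n (n - j) = qbinom Q n j"
  unfolding qbinom_def by (simp add: mult.commute)

section \<open>The alternating sum\<close>

lemma sum_gauss_binom_Suc:
  "(\<Sum>j\<le>Suc N. a j * gauss_binom Q (Suc N) j)
     = (\<Sum>j\<le>N. a j * Q ^ j * gauss_binom Q N j) + (\<Sum>j\<le>N. a (Suc j) * gauss_binom Q N j)"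
proof -
  have "a 0 + (\<Sum>j\<le>N. a (Suc j) * Q ^ Suc j * gauss_binom Q N (Suc j))
      = (\<Sum>j\<le>Suc N. a j * Q ^ j * gauss_binom Q N j)"
    by (simp add: sum.atMost_Suc_shift del: sum.atMost_Suc)
  also have "\<dots> = (\<Sum>j\<le>N. a j * Q ^ j * gauss_binom Q N j)"
    by (simp add: gauss_binom_eq_0)
  finally have shift: "a 0 + (\<Sum>j\<le>N. a (Suc j) * Q ^ Suc j * gauss_binom Q N (Suc j))
      = (\<Sum>j\<le>N. a j * Q ^ j * gauss_binom Q N j)" .
  have "(\<Sum>j\<le>Suc N. a j * gauss_binom Q (Suc N) j)
      = a 0 + (\<Sum>j\<le>N. a (Suc j) * Q ^ Suc j * gauss_binom Q N (Suc j))
        + (\<Sum>j\<le>N. a (Suc j) * gauss_binom Q N j)"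
    by (simp add: sum.atMost_Suc_shift distrib_left sum.distrib mult_ac del: sum.atMost_Suc)
  then show ?thesis unfolding shift .
qed

text \<open>The exponent \<open>m\<close> is an integer, so that it can be shifted freely and reach the centre of
  symmetry \<open>-r N\<close>. Since \<open>0 powr x = 0\<close>, statements need \<open>q \<noteq> 0\<close>.\<close>

definition alt_gauss_sum :: "nat \<Rightarrow> nat \<Rightarrow> nat \<Rightarrow> int \<Rightarrow> real \<Rightarrow> real" where
  "alt_gauss_sum r k N m q =
     (\<Sum>j\<le>N. (-1) ^ j * q powr (real r * real j ^ 2 + of_int m * real j) * gauss_binom (q ^ k) N j)"

lemma alt_gauss_sum_0: "q \<noteq> 0 \<Longrightarrow> alt_gauss_sum r k 0 m q = 1"
  by (simp add: alt_gauss_sum_def)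

lemma alt_gauss_sum_Suc:
  assumes "q > 0"
  shows "alt_gauss_sum r k (Suc N) m q
           = alt_gauss_sum r k N (m + int k) q
             - q powr (real r + of_int m) * alt_gauss_sum r k N (m + 2 * int r) q"
proof -
  define a where "a j = (-1) ^ j * q powr (real r * real j ^ 2 + of_int m * real j)" for j :: nat
  have "(\<Sum>j\<le>N. a j * (q ^ k) ^ j * gauss_binom (q ^ k) N j) = alt_gauss_sum r k N (m + int k) q"
    unfolding alt_gauss_sum_def
  proof (intro sum.cong refl)
    fix j
    have "(q ^ k) ^ j = q powr (real k * real j)"
      using assms by (simp add: powr_realpow[symmetric] power_mult[symmetric] powr_powr)
    then show "a j * (q ^ k) ^ j * gauss_binom (q ^ k) N j
        = (-1) ^ j * q powr (real r * real j ^ 2 + of_int (m + int k) * real j) * gauss_binom (q ^ k) N j"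
      unfolding a_def by (simp add: powr_add[symmetric] algebra_simps)
  qed
  moreover have "(\<Sum>j\<le>N. a (Suc j) * gauss_binom (q ^ k) N j)
      = - (q powr (real r + of_int m) * alt_gauss_sum r k N (m + 2 * int r) q)"
    unfolding alt_gauss_sum_def sum_distrib_left sum_negf[symmetric]
  proof (intro sum.cong refl)
    fix j
    have "real r * real (Suc j) ^ 2 + of_int m * real (Suc j)
        = (real r + of_int m) + (real r * real j ^ 2 + of_int (m + 2 * int r) * real j)"
      by (simp add: power2_eq_square algebra_simps)
    then show "a (Suc j) * gauss_binom (q ^ k) N j = - (q powr (real r + of_int m) *
        ((-1) ^ j * q powr (real r * real j ^ 2 + of_int (m + 2 * int r) * real j) * gauss_binom (q ^ k) N j))"
      unfolding a_def by (simp add: powr_add)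
  qed
  moreover have "alt_gauss_sum r k (Suc N) m q
      = (\<Sum>j\<le>N. a j * (q ^ k) ^ j * gauss_binom (q ^ k) N j)
        + (\<Sum>j\<le>N. a (Suc j) * gauss_binom (q ^ k) N j)"
    unfolding alt_gauss_sum_def a_def by (rule sum_gauss_binom_Suc)
  ultimately show ?thesis by simp
qed

fun alt_gauss_symbol :: "real \<Rightarrow> nat \<Rightarrow> nat \<Rightarrow> real" where
  "alt_gauss_symbol c 0 l = of_bool (l = 0)"
| "alt_gauss_symbol c (Suc N) l
     = c * alt_gauss_symbol c N (Suc l) + of_nat l * alt_gauss_symbol c N (l - 1)"

lemma eventually_at_1_gt_0: "eventually (\<lambda>q::real. q > 0) (at 1)"
  by (rule order_tendstoD(1)[OF tendsto_ident_at]) simp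

lemma graded_alt_gauss_sum:
  "graded N (alt_gauss_symbol (real k - 2 * real r) N) (alt_gauss_sum r k N)"
proof (induction N)
  case 0
  have "alt_gauss_symbol (real k - 2 * real r) 0 = (\<lambda>l. of_bool (l = 0))" by (rule ext) simp
  moreover have "eventually (\<lambda>q. \<forall>m. 1 = alt_gauss_sum r k 0 m q) (at 1)"
    using eventually_at_1_gt_0 by eventually_elim (simp add: alt_gauss_sum_0)
  ultimately show ?case by (simp add: graded_cong[OF graded_one])
next
  case (Suc N)
  define h where "h = int k - 2 * int r"
  define \<sigma> where "\<sigma> = alt_gauss_symbol (real k - 2 * real r) N"
  have "graded (Suc N) (\<lambda>l. real_of_int h * \<sigma> (Suc l))
      (\<lambda>m. fdiff h (alt_gauss_sum r k N) (m + 2 * int r))"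
    unfolding \<sigma>_def by (intro graded_shift graded_fdiff Suc.IH)
  moreover have "graded (1 + N) (symbol_mult 1 (\<lambda>l. of_bool (l = 1)) \<sigma>)
      (\<lambda>m q. (1 - q powr (real r + of_int m)) * alt_gauss_sum r k N (m + 2 * int r) q)"
    unfolding \<sigma>_def by (intro graded_mult graded_one_minus_powr graded_shift Suc.IH)
  ultimately have sum: "graded (Suc N)
      (\<lambda>l. real_of_int h * \<sigma> (Suc l) + symbol_mult 1 (\<lambda>l. of_bool (l = 1)) \<sigma> l)
      (\<lambda>m q. fdiff h (alt_gauss_sum r k N) (m + 2 * int r) q
             + (1 - q powr (real r + of_int m)) * alt_gauss_sum r k N (m + 2 * int r) q)"
    by (intro graded_add) simp_all
  have symbol: "(\<lambda>l. real_of_int h * \<sigma> (Suc l) + symbol_mult 1 (\<lambda>l. of_bool (l = 1)) \<sigma> l)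
      = alt_gauss_symbol (real k - 2 * real r) (Suc N)"
    unfolding symbol_mult_indicator_1 by (rule ext) (simp add: \<sigma>_def h_def)
  have "eventually (\<lambda>q. \<forall>m. fdiff h (alt_gauss_sum r k N) (m + 2 * int r) q
             + (1 - q powr (real r + of_int m)) * alt_gauss_sum r k N (m + 2 * int r) q
      = alt_gauss_sum r k (Suc N) m q) (at 1)"
    using eventually_at_1_gt_0
  proof eventually_elim
    case (elim q)
    have "m + 2 * int r + h = m + int k" for m unfolding h_def by simp
    then show ?case
      by (simp add: fdiff_def alt_gauss_sum_Suc[OF elim] algebra_simps)
  qed
  from graded_cong[OF sum this] show ?case unfolding symbol .
qed

lemma alt_gauss_symbol_eq_0: "N < l \<Longrightarrow> alt_gauss_symbol c N l = 0"
  by (induction N arbitrary: l) auto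

lemma alt_gauss_symbol_diag: "alt_gauss_symbol c l l = fact l"
  by (induction l) (simp_all add: alt_gauss_symbol_eq_0)

lemma alt_gauss_symbol_closed_form:
  "alt_gauss_symbol c (l + 2 * j) l * (fact j * 2 ^ j) = c ^ j * fact (l + 2 * j)"
proof (induction j arbitrary: l)
  case 0
  then show ?case by (simp add: alt_gauss_symbol_diag)
next
  case (Suc j)
  note IH_j = Suc.IH
  have scale: "fact (Suc j) * 2 ^ Suc j = (2 * real j + 2) * (fact j * 2 ^ j :: real)"
    by (simp add: algebra_simps)
  show ?case
  proof (induction l)
    case 0
    have "alt_gauss_symbol c (0 + 2 * Suc j) 0 = c * alt_gauss_symbol c (1 + 2 * j) 1"
      by (simp add: numeral_2_eq_2)
    then have "alt_gauss_symbol c (0 + 2 * Suc j) 0 * (fact (Suc j) * 2 ^ Suc j)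
        = c * (2 * real j + 2) * c ^ j * fact (1 + 2 * j)"
      unfolding scale using IH_j[of 1] by simp
    also have "\<dots> = c ^ Suc j * fact (0 + 2 * Suc j)"
      by (simp add: fact_Suc algebra_simps)
    finally show ?case .
  next
    case (Suc l)
    define X where "X = alt_gauss_symbol c (Suc (Suc l) + 2 * j) (Suc (Suc l))"
    define Y where "Y = alt_gauss_symbol c (l + 2 * Suc j) l"
    have "alt_gauss_symbol c (Suc l + 2 * Suc j) (Suc l) = c * X + real (Suc l) * Y"
      unfolding X_def Y_def by (simp add: numeral_2_eq_2)
    then have "alt_gauss_symbol c (Suc l + 2 * Suc j) (Suc l) * (fact (Suc j) * 2 ^ Suc j)
        = c * (2 * real j + 2) * (X * (fact j * 2 ^ j)) + real (Suc l) * (Y * (fact (Suc j) * 2 ^ Suc j))"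
      by (simp only: scale) (simp add: algebra_simps)
    also have "\<dots> = c * (2 * real j + 2) * (c ^ j * fact (Suc (Suc l) + 2 * j))
          + real (Suc l) * (c ^ Suc j * fact (l + 2 * Suc j))"
      unfolding X_def Y_def IH_j Suc.IH ..
    also have "\<dots> = c ^ Suc j * fact (Suc l + 2 * Suc j)"
      by (simp add: fact_Suc algebra_simps)
    finally show ?case .
  qed
qed

lemma fact_odd: "(fact (2 * n + 1) :: real) = (\<Prod>i<n+1. real (2 * i + 1)) * (fact n * 2 ^ n)"
proof (induction n)
  case (Suc n)
  have "(fact (2 * Suc n + 1) :: real) = real (2 * n + 3) * real (2 * n + 2) * fact (2 * n + 1)"
    by (simp add: fact_Suc algebra_simps numeral_3_eq_3)
  also have "\<dots> = (\<Prod>i<Suc n + 1. real (2 * i + 1)) * (fact (Suc n) * 2 ^ Suc n)"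
    unfolding Suc.IH by (simp add: fact_Suc algebra_simps)
  finally show ?case .
qed simp

lemma alt_gauss_symbol_odd_1: "alt_gauss_symbol c (2 * n + 1) 1 = c ^ n * (\<Prod>i<n+1. real (2 * i + 1))"
proof -
  have "alt_gauss_symbol c (2 * n + 1) 1 * (fact n * 2 ^ n)
      = c ^ n * (\<Prod>i<n+1. real (2 * i + 1)) * (fact n * 2 ^ n)"
    using alt_gauss_symbol_closed_form[of c 1 n] fact_odd[of n] by (simp add: add.commute mult_ac)
  then show ?thesis by simp
qed

lemma gauss_binom_symmetric:
  assumes "Q > 0" "Q \<noteq> 1" "j \<le> n"
  shows "gauss_binom Q n (n - j) = gauss_binom Q n j"
  using assms qbinom_symmetric[OF assms(3), of Q]
  by (simp add: qbinom_eq_gauss_binom[symmetric])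

lemma alt_gauss_sum_center_eq_0:
  assumes q: "q > 0" "q \<noteq> 1" and "k \<ge> 1" "odd N"
  shows "alt_gauss_sum r k N (- (int r * int N)) q = 0"
proof -
  define t where "t j = (-1) ^ j * q powr (real r * real j ^ 2 - real r * real N * real j)
      * gauss_binom (q ^ k) N j" for j
  have Q: "q ^ k > 0" "q ^ k \<noteq> 1" using q \<open>k \<ge> 1\<close> power_neq_1[OF q] by auto
  have "(\<Sum>j\<le>N. t j) = (\<Sum>j\<le>N. t (N - j))"
    by (rule sum.reindex_bij_witness[of _ "\<lambda>j. N - j" "\<lambda>j. N - j"]) auto
  also have "\<dots> = (\<Sum>j\<le>N. - t j)"
  proof (intro sum.cong refl)
    fix j assume "j \<in> {..N}"
    then have j: "j \<le> N" by simp
    have "(-1::real) ^ (N - j) = - ((-1) ^ j)"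
      using \<open>odd N\<close> j by (simp add: minus_one_power_iff even_diff_nat)
    moreover have "real r * real (N - j) ^ 2 - real r * real N * real (N - j)
        = real r * real j ^ 2 - real r * real N * real j"
      using j by (simp add: of_nat_diff power2_eq_square algebra_simps)
    ultimately show "t (N - j) = - t j"
      unfolding t_def using gauss_binom_symmetric[OF Q j] by simp
  qed
  finally have "(\<Sum>j\<le>N. t j) = 0" by (simp add: sum_negf)
  moreover have "alt_gauss_sum r k N (- (int r * int N)) q = (\<Sum>j\<le>N. t j)"
    unfolding alt_gauss_sum_def t_def by (simp add: algebra_simps)
  ultimately show ?thesis by simp
qed

text \<open>For odd \<open>N\<close> the sum vanishes at the centre \<open>m\<^sub>0 = -r N\<close>, so at \<open>m\<close> it is the first
  difference with step \<open>m - m\<^sub>0\<close>, which has even weight \<open>N + 1\<close>.\<close>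

lemma tendsto_alt_gauss_sum_odd:
  assumes "k \<ge> 1"
  shows "((\<lambda>q. alt_gauss_sum r k (2 * n + 1) (int m) q / (1 - q) ^ (n + 1))
           \<longlongrightarrow> (real k - 2 * real r) ^ n * (\<Prod>i<n+1. real (2 * i + 1)) * real ((2 * n + 1) * r + m)) (at 1)"
proof -
  define N where "N = 2 * n + 1"
  define m\<^sub>0 where "m\<^sub>0 = - (int r * int N)"
  define h where "h = int m - m\<^sub>0"
  have "half_power_asymp (N + 1) (alt_gauss_symbol (real k - 2 * real r) N 1 * real_of_int h)
      (fdiffs [h] (alt_gauss_sum r k N) m\<^sub>0)"
    using gradedD[OF graded_alt_gauss_sum[of N k r], of "[h]" m\<^sub>0] by simp
  moreover have "even (N + 1)" "(N + 1) div 2 = n + 1" unfolding N_def by simp_all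
  moreover have "alt_gauss_symbol (real k - 2 * real r) N 1 * real_of_int h
      = (real k - 2 * real r) ^ n * (\<Prod>i<n+1. real (2 * i + 1)) * real ((2 * n + 1) * r + m)"
    unfolding N_def alt_gauss_symbol_odd_1 h_def m\<^sub>0_def by (simp add: algebra_simps)
  ultimately have "((\<lambda>q. fdiffs [h] (alt_gauss_sum r k N) m\<^sub>0 q / (1 - q) ^ (n + 1))
      \<longlongrightarrow> (real k - 2 * real r) ^ n * (\<Prod>i<n+1. real (2 * i + 1)) * real ((2 * n + 1) * r + m)) (at 1)"
    unfolding half_power_asymp_def by (simp only: if_True)
  moreover have "eventually (\<lambda>q. fdiffs [h] (alt_gauss_sum r k N) m\<^sub>0 q / (1 - q) ^ (n + 1)
      = alt_gauss_sum r k N (int m) q / (1 - q) ^ (n + 1)) (at 1)"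
    using eventually_at_1_gt_0 eventually_neq_at_within[of 1 1]
  proof eventually_elim
    case (elim q)
    with assms have "alt_gauss_sum r k N m\<^sub>0 q = 0"
      unfolding m\<^sub>0_def N_def by (intro alt_gauss_sum_center_eq_0) simp_all
    then show ?case by (simp add: fdiff_def h_def)
  qed
  ultimately show ?thesis unfolding N_def by (rule Lim_transform_eventually)
qed

lemma tendsto_qpoch_odd:
  "((\<lambda>q::real. qpoch q (q\<^sup>2) (n + 1) / (1 - q) ^ (n + 1)) \<longlongrightarrow> (\<Prod>i<n+1. real (2 * i + 1))) (at 1)"
proof -
  have "((\<lambda>q::real. \<Prod>i<n+1. (1 - q powr real (2 * i + 1)) / (1 - q))
      \<longlongrightarrow> (\<Prod>i<n+1. real (2 * i + 1))) (at 1)"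
    by (intro tendsto_prod tendsto_one_minus_powr_over)
  moreover have "eventually (\<lambda>q::real. (\<Prod>i<n+1. (1 - q powr real (2 * i + 1)) / (1 - q))
      = qpoch q (q\<^sup>2) (n + 1) / (1 - q) ^ (n + 1)) (at 1)"
    using eventually_at_1_gt_0
  proof eventually_elim
    case (elim q)
    have "1 - q powr real (2 * i + 1) = 1 - (q\<^sup>2) ^ i * q" for i
      by (subst powr_realpow[OF elim]) (simp add: power_mult power_add)
    then show ?case by (simp add: qpoch_def prod_dividef)
  qed
  ultimately show ?thesis by (rule Lim_transform_eventually)
qed

lemma alt_gauss_sum_of_nat:
  assumes "q > 0" "q \<noteq> 1" "k \<ge> 1"
  shows "alt_gauss_sum r k N (int m) q
           = (\<Sum>j = 0..N. (-1) ^ j * q ^ (r * j\<^sup>2 + m * j) * qbinom (q ^ k) N j)"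
  unfolding alt_gauss_sum_def atLeast0AtMost
proof (intro sum.cong refl)
  fix j assume "j \<in> {..N}"
  moreover have "q ^ k > 0" "q ^ k \<noteq> 1" using assms power_neq_1[of q k] by auto
  ultimately have "qbinom (q ^ k) N j = gauss_binom (q ^ k) N j"
    by (intro qbinom_eq_gauss_binom) auto
  moreover have "q powr (real r * real j ^ 2 + real_of_int (int m) * real j) = q ^ (r * j\<^sup>2 + m * j)"
    using powr_realpow[OF assms(1), of "r * j\<^sup>2 + m * j"] by simp
  ultimately show "(-1) ^ j * q powr (real r * real j ^ 2 + real_of_int (int m) * real j) * gauss_binom (q ^ k) N j
      = (-1) ^ j * q ^ (r * j\<^sup>2 + m * j) * qbinom (q ^ k) N j"
    by simp
qed

theorem theorem2p4:
  fixes r m k n :: nat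
  assumes "k \<ge> 1"
  shows "((\<lambda>q::real. (\<Sum>j = 0..2*n+1. (-1) ^ j * q ^ (r * j\<^sup>2 + m * j)
                             * qbinom (q ^ k) (2*n+1) j)
                    / qpoch q (q\<^sup>2) (n+1))
          \<longlongrightarrow> real ((2*n+1)*r + m) * (real k - 2 * real r) ^ n) (at 1)"
proof -
  define P where "P = (\<Prod>i<n+1. real (2 * i + 1))"
  have "P > 0" unfolding P_def by (intro prod_pos) auto
  have lim: "((\<lambda>q. (alt_gauss_sum r k (2 * n + 1) (int m) q / (1 - q) ^ (n + 1))
            / (qpoch q (q\<^sup>2) (n + 1) / (1 - q) ^ (n + 1)))
      \<longlongrightarrow> (real k - 2 * real r) ^ n * P * real ((2 * n + 1) * r + m) / P) (at 1)"
    unfolding P_def using \<open>P > 0\<close>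
    by (intro tendsto_divide tendsto_alt_gauss_sum_odd assms tendsto_qpoch_odd) (simp add: P_def)
  have val: "(real k - 2 * real r) ^ n * P * real ((2 * n + 1) * r + m) / P
      = real ((2 * n + 1) * r + m) * (real k - 2 * real r) ^ n"
    using \<open>P > 0\<close> by simp
  have "eventually (\<lambda>q. (alt_gauss_sum r k (2 * n + 1) (int m) q / (1 - q) ^ (n + 1))
            / (qpoch q (q\<^sup>2) (n + 1) / (1 - q) ^ (n + 1))
      = (\<Sum>j = 0..2*n+1. (-1) ^ j * q ^ (r * j\<^sup>2 + m * j) * qbinom (q ^ k) (2*n+1) j)
          / qpoch q (q\<^sup>2) (n+1)) (at 1)"
    using eventually_at_1_gt_0 eventually_neq_at_within[of 1 1]
  proof eventually_elim
    case (elim q)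
    then have "(1 - q) ^ (n + 1) \<noteq> 0" by simp
    then show ?case unfolding alt_gauss_sum_of_nat[OF elim assms] by simp
  qed
  from Lim_transform_eventually[OF lim this] show ?thesis unfolding val .
qed

end
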